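(* Suppose $\mathcal U$ is quasiconvex and strongly stable with parameters $a,b,q$, and that $\Delta_i>0$ for all $i\ne i^*$. Let $L=b\bigl(1+\max_{i,j\in\mathbb K}\|F^{(i)}-F^{(j)}\|^{q-1}\bigr)$ and $\alpha>2$. Then the $\mathcal U$-UCB policy $\pi$ with parameter $\alpha$ satisfies, for every $T\ge 1$, $$\tilde{\mathcal R}(\pi,T)\le\frac LT\sum_{i\ne i^*}\Bigl(\frac{\alpha\log T}{\phi(\Delta_i/2)}+\frac{\alpha+6}{\alpha-2}\Bigr)\|F^{(i^* )}-F^{(i)}\|.$$
   Context: Bandit setting: $K\ge1$, $\mathbb K=\{1,\dots,K\}$; arm $i$ produces i.i.d. rewards $X^{(i)}_1,X^{(i)}_2,\dots$ with distribution function $F^{(i)}$, all rewards mutually independent. An admissible policy $\pi=(\pi_1,\pi_2,\dots)$ chooses $\pi_t\in\mathbb K$ as a measurable function of an independent randomization variable and past actions/rewards; $\tau_i(t)=\sum_{s\le t}\mathbf 1\{\pi_s=i\}$, and the reward at time $t$ is $X^{(i)}_{\tau_i(t)}$ on $\{\pi_t=i\}$. Empirical distribution functions: $\hat F_t(x_1,\dots,x_t;y)=\frac1t\sum_{s\le t}\mathbf 1\{x_s\le y\}$, $\hat F^{(i)}_t=\hat F_t(X^{(i)}_1,\dots,X^{(i)}_t;\cdot)$; $\hat{\mathcal D}$ is the set of all empirical distribution functions of finite real sequences. $\Delta_{K-1}$ is the probability simplex, $F_p=\sum_ip_iF^{(i)}$, $\mathcal D^\Delta=\{F_p:p\in\Delta_{K-1}\}$.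 $(L,\|\cdot\|)$ is a Banach space of bounded functions on $\mathbb R$ containing $\mathcal D^\Delta\cup\hat{\mathcal D}$, and $\mathcal U:L\to\mathbb R$. Quasiconvex: $\mathcal U(\lambda F+(1-\lambda)G)\le\max\{\mathcal U(F),\mathcal U(G)\}$. Strongly stable: (1) there exist $b>0,q\ge1$ with $|\mathcal U(F)-\mathcal U(G)|\le b(\|F-G\|+\|F-G\|^q)$ for all $F\in\mathcal D^\Delta$, $G\in\mathcal D^\Delta\cup\hat{\mathcal D}$; (2) there is $a>0$ with $\mathbb P(\|\hat F^{(i)}_t-F^{(i)}\|\ge x)\le2\exp(-atx^2)$ for all $i$, $x>0$, $t\ge1$. Let $p^*\in\arg\max_{p\in\Delta_{K-1}}\mathcal U(F_p)$, $\Delta_i=\mathcal U(F_{p^*})-\mathcal U(F^{(i)})$, $i^*\in\arg\min_i\Delta_i$. Proxy distribution $\tilde F^\pi_T=\frac1T\sum_i\tau_i(T)F^{(i)}$ and proxy regret $\tilde{\mathcal R}(\pi,T)=\mathbb E[\mathcal U(F_{p^*})-\mathcal U(\tilde F^\pi_T)]$. Define $\phi(y)=\min\{a(\frac{y}{2b})^2,a(\frac{y}{2b})^{2/q}\}$ and $\phi^{-1}(x)=\max\{2b(\frac xa)^{1/2},2b(\frac xa)^{q/2}\}$. The $\mathcal U$-UCB policy with parameter $\alpha$ pulls each arm once at times $t=1,\dots,K$, and for $t\ge K+1$ chooses $\pi_t\in\arg\max_{i\in\mathbb K}\bigl[\mathcal U(\hat F^{(i)}_{\tau_i(t-1)})+\phi^{-1}\bigl(\frac{\alpha\log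 t}{\tau_i(t-1)}\bigr)\bigr]$. *)

theory Defs
  imports "HOL-Probability.Probability"
begin

text \<open>Arms are indexed by {1..K}; samples of each arm are indexed from 1.\<close>

definition emp_cdf :: "real list \<Rightarrow> real \<Rightarrow> real" where
  "emp_cdf xs y = (\<Sum>s<length xs. if xs ! s \<le> y then 1 else 0) / real (length xs)"

definition emp_cdfs :: "(real \<Rightarrow> real) set" where
  "emp_cdfs = {emp_cdf xs | xs. xs \<noteq> []}"

definition emp_arm :: "(nat \<Rightarrow> nat \<Rightarrow> 'a \<Rightarrow> real) \<Rightarrow> nat \<Rightarrow> nat \<Rightarrow> 'a \<Rightarrow> real \<Rightarrow> real" where
  "emp_arm X i t \<omega> = emp_cdf (map (\<lambda>s. X i s \<omega>) [1..<t+1])"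

definition prob_simplex :: "nat \<Rightarrow> (nat \<Rightarrow> real) set" where
  "prob_simplex K = {p. (\<forall>i\<in>{1..K}. 0 \<le> p i) \<and> (\<Sum>i=1..K. p i) = 1}"

definition mix :: "nat \<Rightarrow> (nat \<Rightarrow> real \<Rightarrow> real) \<Rightarrow> (nat \<Rightarrow> real) \<Rightarrow> real \<Rightarrow> real" where
  "mix K F p = (\<lambda>y. \<Sum>i=1..K. p i * F i y)"

definition mixtures :: "nat \<Rightarrow> (nat \<Rightarrow> real \<Rightarrow> real) \<Rightarrow> (real \<Rightarrow> real) set" where
  "mixtures K F = mix K F ` prob_simplex K"

definition banach_bounded_fns :: "(real \<Rightarrow> real) set \<Rightarrow> ((real \<Rightarrow> real) \<Rightarrow> real) \<Rightarrow> bool" where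
  "banach_bounded_fns L N \<longleftrightarrow>
     (\<lambda>y. 0) \<in> L \<and>
     (\<forall>f\<in>L. \<forall>g\<in>L. (\<lambda>y. f y + g y) \<in> L) \<and>
     (\<forall>c. \<forall>f\<in>L. (\<lambda>y. c * f y) \<in> L) \<and>
     (\<forall>f\<in>L. bounded (range f)) \<and>
     (\<forall>f\<in>L. N f = 0 \<longleftrightarrow> f = (\<lambda>y. 0)) \<and>
     (\<forall>f\<in>L. \<forall>g\<in>L. N (\<lambda>y. f y + g y) \<le> N f + N g) \<and>
     (\<forall>c. \<forall>f\<in>L. N (\<lambda>y. c * f y) = \<bar>c\<bar> * N f) \<and>
     (\<forall>s. (\<forall>n. s n \<in> L) \<and> (\<forall>e>0. \<exists>m0. \<forall>m\<ge>m0. \<forall>n\<ge>m0. N (\<lambda>y. s m y - s n y) < e)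
          \<longrightarrow> (\<exists>g\<in>L. (\<lambda>n. N (\<lambda>y. s n y - g y)) \<longlonglongrightarrow> 0))"

definition quasiconvex_on :: "(real \<Rightarrow> real) set \<Rightarrow> ((real \<Rightarrow> real) \<Rightarrow> real) \<Rightarrow> bool" where
  "quasiconvex_on L U \<longleftrightarrow>
     (\<forall>F\<in>L. \<forall>G\<in>L. \<forall>l\<in>{0..1::real}. U (\<lambda>y. l * F y + (1 - l) * G y) \<le> max (U F) (U G))"

text \<open>Strong stability with parameters a, b, q.  The probability in (2) is understood
  as the probability of an event (the set is required to be measurable).\<close>
definition strongly_stable ::
  "'a measure \<Rightarrow> nat \<Rightarrow> (nat \<Rightarrow> nat \<Rightarrow> 'a \<Rightarrow> real) \<Rightarrow> (nat \<Rightarrow> real \<Rightarrow> real)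
   \<Rightarrow> ((real \<Rightarrow> real) \<Rightarrow> real) \<Rightarrow> ((real \<Rightarrow> real) \<Rightarrow> real) \<Rightarrow> real \<Rightarrow> real \<Rightarrow> real \<Rightarrow> bool" where
  "strongly_stable M K X F N U a b q \<longleftrightarrow>
     b > 0 \<and> q \<ge> 1 \<and>
     (\<forall>F'\<in>mixtures K F. \<forall>G\<in>mixtures K F \<union> emp_cdfs.
        \<bar>U F' - U G\<bar> \<le> b * (N (\<lambda>y. F' y - G y) + N (\<lambda>y. F' y - G y) powr q)) \<and>
     a > 0 \<and>
     (\<forall>i\<in>{1..K}. \<forall>x>0. \<forall>t\<ge>1.
        {\<omega>\<in>space M. N (\<lambda>y. emp_arm X i t \<omega> y - F i y) \<ge> x} \<in> sets M \<and>
        measure M {\<omega>\<in>space M. N (\<lambda>y. emp_arm X i t \<omega> y - F i y) \<ge> x}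
          \<le> 2 * exp (- a * real t * x\<^sup>2))"

text \<open>Probability space M, rewards X i s (arm i in {1..K}, sample s >= 1), randomization Z;
  all mutually independent; each arm i.i.d.; F i is the distribution function of arm i.\<close>
definition bandit_model ::
  "'a measure \<Rightarrow> nat \<Rightarrow> (nat \<Rightarrow> nat \<Rightarrow> 'a \<Rightarrow> real) \<Rightarrow> ('a \<Rightarrow> real) \<Rightarrow> (nat \<Rightarrow> real \<Rightarrow> real) \<Rightarrow> bool" where
  "bandit_model M K X Z F \<longleftrightarrow>
     prob_space M \<and> K \<ge> 1 \<and>
     Z \<in> borel_measurable M \<and>
     (\<forall>i\<in>{1..K}. \<forall>s\<ge>1. X i s \<in> borel_measurable M) \<and>
     prob_space.indep_vars M (\<lambda>_. borel)
        (\<lambda>k. case k of None \<Rightarrow> Z | Some (i, s) \<Rightarrow> X i s)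
        (insert None (Some ` ({1..K} \<times> {1..}))) \<and>
     (\<forall>i\<in>{1..K}. \<forall>s\<ge>1. distr M borel (X i s) = distr M borel (X i 1)) \<and>
     (\<forall>i\<in>{1..K}. F i = cdf (distr M borel (X i 1)))"

definition pulls :: "(nat \<Rightarrow> 'a \<Rightarrow> nat) \<Rightarrow> nat \<Rightarrow> nat \<Rightarrow> 'a \<Rightarrow> nat" where
  "pulls pol i t \<omega> = card {s\<in>{1..t}. pol s \<omega> = i}"

definition reward :: "(nat \<Rightarrow> 'a \<Rightarrow> nat) \<Rightarrow> (nat \<Rightarrow> nat \<Rightarrow> 'a \<Rightarrow> real) \<Rightarrow> nat \<Rightarrow> 'a \<Rightarrow> real" where
  "reward pol X t \<omega> = X (pol t \<omega>) (pulls pol (pol t \<omega>) t \<omega>) \<omega>"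

definition hist_sets ::
  "'a measure \<Rightarrow> ('a \<Rightarrow> real) \<Rightarrow> (nat \<Rightarrow> 'a \<Rightarrow> nat) \<Rightarrow> (nat \<Rightarrow> nat \<Rightarrow> 'a \<Rightarrow> real) \<Rightarrow> nat \<Rightarrow> 'a set set" where
  "hist_sets M Z pol X t = sigma_sets (space M)
     ({Z -` A \<inter> space M | A. A \<in> sets borel} \<union>
      {pol s -` A \<inter> space M | s A. 1 \<le> s \<and> s < t} \<union>
      {reward pol X s -` B \<inter> space M | s B. 1 \<le> s \<and> s < t \<and> B \<in> sets borel})"

definition admissible_policy ::
  "'a measure \<Rightarrow> nat \<Rightarrow> (nat \<Rightarrow> nat \<Rightarrow> 'a \<Rightarrow> real) \<Rightarrow> ('a \<Rightarrow> real) \<Rightarrow> (nat \<Rightarrow> 'a \<Rightarrow> nat) \<Rightarrow> bool" where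
  "admissible_policy M K X Z pol \<longleftrightarrow>
     (\<forall>t\<ge>1. (\<forall>\<omega>\<in>space M. pol t \<omega> \<in> {1..K}) \<and>
            (\<forall>i. {\<omega>\<in>space M. pol t \<omega> = i} \<in> hist_sets M Z pol X t))"

definition phi :: "real \<Rightarrow> real \<Rightarrow> real \<Rightarrow> real \<Rightarrow> real" where
  "phi a b q y = min (a * (y / (2 * b))\<^sup>2) (a * (y / (2 * b)) powr (2 / q))"

definition phi_inv :: "real \<Rightarrow> real \<Rightarrow> real \<Rightarrow> real \<Rightarrow> real" where
  "phi_inv a b q x = max (2 * b * (x / a) powr (1 / 2)) (2 * b * (x / a) powr (q / 2))"

definition ucb_index ::
  "((real \<Rightarrow> real) \<Rightarrow> real) \<Rightarrow> (nat \<Rightarrow> nat \<Rightarrow> 'a \<Rightarrow> real) \<Rightarrow> real \<Rightarrow> real \<Rightarrow> real \<Rightarrow> real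
   \<Rightarrow> (nat \<Rightarrow> 'a \<Rightarrow> nat) \<Rightarrow> nat \<Rightarrow> nat \<Rightarrow> 'a \<Rightarrow> real" where
  "ucb_index U X a b q \<alpha> pol i t \<omega> =
     U (emp_arm X i (pulls pol i (t - 1) \<omega>) \<omega>)
     + phi_inv a b q (\<alpha> * ln (real t) / real (pulls pol i (t - 1) \<omega>))"

text \<open>pol follows the U-UCB rule (with arbitrary tie-breaking among maximizers).\<close>
definition ucb_policy ::
  "'a measure \<Rightarrow> nat \<Rightarrow> (nat \<Rightarrow> nat \<Rightarrow> 'a \<Rightarrow> real) \<Rightarrow> ((real \<Rightarrow> real) \<Rightarrow> real)
   \<Rightarrow> real \<Rightarrow> real \<Rightarrow> real \<Rightarrow> real \<Rightarrow> (nat \<Rightarrow> 'a \<Rightarrow> nat) \<Rightarrow> bool" where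
  "ucb_policy M K X U a b q \<alpha> pol \<longleftrightarrow>
     (\<forall>\<omega>\<in>space M.
        (\<forall>t\<in>{1..K}. pol t \<omega> = t) \<and>
        (\<forall>t\<ge>K+1. pol t \<omega> \<in> {1..K} \<and>
           (\<forall>j\<in>{1..K}. ucb_index U X a b q \<alpha> pol j t \<omega> \<le> ucb_index U X a b q \<alpha> pol (pol t \<omega>) t \<omega>)))"

definition gap :: "((real \<Rightarrow> real) \<Rightarrow> real) \<Rightarrow> nat \<Rightarrow> (nat \<Rightarrow> real \<Rightarrow> real) \<Rightarrow> (nat \<Rightarrow> real) \<Rightarrow> nat \<Rightarrow> real" where
  "gap U K F pstar i = U (mix K F pstar) - U (F i)"

definition proxy_dist :: "nat \<Rightarrow> (nat \<Rightarrow> real \<Rightarrow> real) \<Rightarrow> (nat \<Rightarrow> 'a \<Rightarrow> nat) \<Rightarrow> nat \<Rightarrow> 'a \<Rightarrow> real \<Rightarrow> real" where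
  "proxy_dist K F pol T \<omega> = (\<lambda>y. (\<Sum>i=1..K. real (pulls pol i T \<omega>) * F i y) / real T)"

definition proxy_regret ::
  "'a measure \<Rightarrow> nat \<Rightarrow> (nat \<Rightarrow> real \<Rightarrow> real) \<Rightarrow> ((real \<Rightarrow> real) \<Rightarrow> real) \<Rightarrow> (nat \<Rightarrow> real)
   \<Rightarrow> (nat \<Rightarrow> 'a \<Rightarrow> nat) \<Rightarrow> nat \<Rightarrow> real" where
  "proxy_regret M K F U pstar pol T =
     (\<integral>\<omega>. U (mix K F pstar) - U (proxy_dist K F pol T \<omega>) \<partial>M)"

text \<open>x^e for x >= 0, e >= 0 with the convention 0^0 = 1.\<close>
definition rpow :: "real \<Rightarrow> real \<Rightarrow> real" where
  "rpow x e = (if e = 0 then 1 else x powr e)"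

definition lip_const ::
  "nat \<Rightarrow> (nat \<Rightarrow> real \<Rightarrow> real) \<Rightarrow> ((real \<Rightarrow> real) \<Rightarrow> real) \<Rightarrow> real \<Rightarrow> real \<Rightarrow> real" where
  "lip_const K F N b q =
     b * (1 + Max {rpow (N (\<lambda>y. F i y - F j y)) (q - 1) | i j. i \<in> {1..K} \<and> j \<in> {1..K}})"

end

theory Submission
  imports Defs
begin

(* By quasiconvexity the optimal mixture F_pstar is no better than the best single
   arm istar, and the proxy distribution is the mixture weighted by the pull frequencies, so
   strong stability bounds the proxy regret by L/T times the sum over suboptimal arms i of
   tau_i(T) ||F_istar - F_i||.  It remains to bound E[tau_i(T)].  Outside the events where an
   empirical distribution function leaves its confidence radius, the index of istar exceeds
   U(F_pstar) while the index of i is below U(F_i) + 2 phi_inv(alpha log t / tau_i); hence once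
   tau_i reaches alpha log T / phi(Delta_i / 2), arm i is only pulled at deviation times.  The
   sub-Gaussian tail bound gives each deviation event probability at most 2 t^-alpha, and summing
   over the fewer than t possible sample sizes leaves a series that converges for alpha > 2. *)

section \<open>Normed spaces of bounded functions and quasiconvexity\<close>

context
  fixes L :: "(real \<Rightarrow> real) set" and N :: "(real \<Rightarrow> real) \<Rightarrow> real"
  assumes banach: "banach_bounded_fns L N"
begin

lemma fns_zero_mem: "(\<lambda>y. 0) \<in> L"
  and fns_add_mem: "f \<in> L \<Longrightarrow> g \<in> L \<Longrightarrow> (\<lambda>y. f y + g y) \<in> L"
  and fns_scale_mem: "f \<in> L \<Longrightarrow> (\<lambda>y. c * f y) \<in> L"
  and fns_norm_zero: "N (\<lambda>y. 0) = 0"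
  and fns_norm_triangle: "f \<in> L \<Longrightarrow> g \<in> L \<Longrightarrow> N (\<lambda>y. f y + g y) \<le> N f + N g"
  and fns_norm_scale: "f \<in> L \<Longrightarrow> N (\<lambda>y. c * f y) = \<bar>c\<bar> * N f"
  using banach unfolding banach_bounded_fns_def by auto

lemma fns_diff_mem: "f \<in> L \<Longrightarrow> g \<in> L \<Longrightarrow> (\<lambda>y. f y - g y) \<in> L"
  using fns_add_mem[of f "\<lambda>y. (-1) * g y"] fns_scale_mem[of g "-1"] by simp

lemma fns_norm_nonneg:
  assumes "f \<in> L"
  shows "0 \<le> N f"
proof -
  have "N (\<lambda>y. f y + (-1) * f y) \<le> N f + N (\<lambda>y. (-1) * f y)"
    by (rule fns_norm_triangle[OF assms fns_scale_mem[OF assms]])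
  moreover have "(\<lambda>y. f y + (-1) * f y) = (\<lambda>y. 0)" by simp
  ultimately show ?thesis using fns_norm_zero fns_norm_scale[OF assms, of "-1"] by simp
qed

lemma fns_norm_diff_commute:
  assumes "f \<in> L" "g \<in> L"
  shows "N (\<lambda>y. g y - f y) = N (\<lambda>y. f y - g y)"
  using fns_norm_scale[OF fns_diff_mem[OF assms], of "-1"] by simp

lemma fns_sum_mem:
  assumes "finite I" "\<And>i. i \<in> I \<Longrightarrow> f i \<in> L"
  shows "(\<lambda>y. \<Sum>i\<in>I. c i * f i y) \<in> L"
  using assms
  by (induction I rule: finite_induct) (simp_all add: fns_zero_mem fns_add_mem fns_scale_mem)

lemma fns_norm_sum_le:
  assumes "finite I" "\<And>i. i \<in> I \<Longrightarrow> f i \<in> L"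
  shows "N (\<lambda>y. \<Sum>i\<in>I. c i * f i y) \<le> (\<Sum>i\<in>I. \<bar>c i\<bar> * N (f i))"
  using assms
proof (induction I rule: finite_induct)
  case empty
  then show ?case using fns_norm_zero by simp
next
  case (insert j I)
  have "N (\<lambda>y. \<Sum>i\<in>insert j I. c i * f i y) = N (\<lambda>y. c j * f j y + (\<Sum>i\<in>I. c i * f i y))"
    using insert.hyps by simp
  also have "\<dots> \<le> N (\<lambda>y. c j * f j y) + N (\<lambda>y. \<Sum>i\<in>I. c i * f i y)"
    using insert.prems
    by (intro fns_norm_triangle fns_scale_mem fns_sum_mem[OF insert.hyps(1)]) auto
  also have "\<dots> \<le> \<bar>c j\<bar> * N (f j) + (\<Sum>i\<in>I. \<bar>c i\<bar> * N (f i))"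
    using insert by (simp add: fns_norm_scale)
  finally show ?case using insert.hyps by simp
qed

lemma fns_norm_diff_convex_comb_le:
  assumes "f \<in> L" "finite I" "\<And>i. i \<in> I \<Longrightarrow> g i \<in> L"
    and "\<And>i. i \<in> I \<Longrightarrow> 0 \<le> p i" "(\<Sum>i\<in>I. p i) = 1"
  shows "N (\<lambda>y. f y - (\<Sum>i\<in>I. p i * g i y)) \<le> (\<Sum>i\<in>I. p i * N (\<lambda>y. f y - g i y))"
proof -
  have "(\<lambda>y. f y - (\<Sum>i\<in>I. p i * g i y)) = (\<lambda>y. \<Sum>i\<in>I. p i * (f y - g i y))"
    using assms(5) by (simp add: right_diff_distrib sum_subtractf flip: sum_distrib_right)
  moreover have "N (\<lambda>y. \<Sum>i\<in>I. p i * (f y - g i y)) \<le> (\<Sum>i\<in>I. \<bar>p i\<bar> * N (\<lambda>y. f y - g i y))"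
    using assms(1-3) by (intro fns_norm_sum_le[where f = "\<lambda>i y. f y - g i y"] fns_diff_mem) auto
  ultimately show ?thesis using assms(4) by simp
qed

lemma quasiconvex_on_convex_comb_le_Max:
  assumes qconv: "quasiconvex_on L U" and "finite S" "S \<noteq> {}"
    and "\<And>i. i \<in> S \<Longrightarrow> G i \<in> L" "\<And>i. i \<in> S \<Longrightarrow> 0 \<le> w i" "(\<Sum>i\<in>S. w i) = 1"
  shows "U (\<lambda>y. \<Sum>i\<in>S. w i * G i y) \<le> Max ((\<lambda>i. U (G i)) ` S)"
  using assms(2-)
proof (induction S arbitrary: w rule: finite_ne_induct)
  case (singleton j)
  then show ?case by simp
next
  case (insert j S)
  have Max_insert: "Max ((\<lambda>i. U (G i)) ` insert j S) = max (U (G j)) (Max ((\<lambda>i. U (G i)) ` S))"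
    using insert.hyps by simp
  have w_split: "w j + (\<Sum>i\<in>S. w i) = 1" using insert by simp
  show ?case
  proof (cases "w j = 1")
    case True
    then have "\<forall>i\<in>S. w i = 0" using w_split insert by (simp add: sum_nonneg_eq_0_iff)
    then have "(\<lambda>y. \<Sum>i\<in>insert j S. w i * G i y) = G j" using insert.hyps True by simp
    then show ?thesis using Max_insert by simp
  next
    case False
    then have wj: "w j < 1" using w_split insert.prems sum_nonneg[of S w] by force
    define w' where "w' i = w i / (1 - w j)" for i
    \<comment> \<open>Renormalise the weights on S and apply quasiconvexity to the two-point combination.\<close>
    have IH: "U (\<lambda>y. \<Sum>i\<in>S. w' i * G i y) \<le> Max ((\<lambda>i. U (G i)) ` S)"
      using insert.IH[of w'] insert.prems w_split wj unfolding w'_def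
      by (auto simp: sum_divide_distrib[symmetric] field_simps)
    have split: "(\<lambda>y. \<Sum>i\<in>insert j S. w i * G i y)
        = (\<lambda>y. w j * G j y + (1 - w j) * (\<Sum>i\<in>S. w' i * G i y))"
      using insert.hyps wj unfolding w'_def by (auto simp: sum_distrib_left)
    have "U (\<lambda>y. w j * G j y + (1 - w j) * (\<Sum>i\<in>S. w' i * G i y))
        \<le> max (U (G j)) (U (\<lambda>y. \<Sum>i\<in>S. w' i * G i y))"
      using qconv insert.prems wj fns_sum_mem[OF insert.hyps(1), of G w']
      unfolding quasiconvex_on_def by simp
    then show ?thesis unfolding split Max_insert using IH by linarith
  qed
qed

end

section \<open>Confidence widths and a p-series bound\<close>

lemma phi_pos: "a > 0 \<Longrightarrow> b > 0 \<Longrightarrow> y > 0 \<Longrightarrow> phi a b q y > 0"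
  unfolding phi_def by simp

lemma phi_inv_mono:
  assumes "a > 0" "b > 0" "q \<ge> 0" "0 \<le> x" "x \<le> x'"
  shows "phi_inv a b q x \<le> phi_inv a b q x'"
proof -
  have "(x/a) powr (1/2) \<le> (x'/a) powr (1/2)" "(x/a) powr (q/2) \<le> (x'/a) powr (q/2)"
    using assms by (auto intro!: powr_mono2 divide_right_mono)
  then show ?thesis unfolding phi_inv_def using assms by (intro max.mono; intro mult_left_mono) auto
qed

lemma phi_inv_phi_le:
  assumes "a > 0" "b > 0" "q \<ge> 1" "y > 0"
  shows "phi_inv a b q (phi a b q y) \<le> y"
proof -
  define u where "u = y / (2 * b)"
  have u: "u > 0" "y = 2 * b * u" using assms unfolding u_def by auto
  have "phi a b q y = a * min (u powr 2) (u powr (2 / q))"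
    using assms u unfolding phi_def u_def[symmetric] by (simp add: min_mult_distrib_left)
  then have phi_u: "phi a b q y / a = min (u powr 2) (u powr (2 / q))"
    using assms by simp
  have "max ((min (u powr 2) (u powr (2/q))) powr (1/2))
      ((min (u powr 2) (u powr (2/q))) powr (q/2)) \<le> u"
  proof (cases "u \<ge> 1")
    case True
    have "u powr (2/q) \<le> u powr 2" using True assms by (intro powr_mono) (auto simp: divide_le_eq)
    then have "min (u powr 2) (u powr (2/q)) = u powr (2/q)" by (rule min_absorb2)
    moreover have "u powr (1/q) \<le> u" using True powr_mono[of "1/q" 1 u] assms by simp
    ultimately show ?thesis using u assms by (simp add: powr_powr)
  next
    case False
    have "u powr 2 \<le> u powr (2/q)"
      using False assms u by (intro powr_mono') (auto simp: divide_le_eq)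
    then have "min (u powr 2) (u powr (2/q)) = u powr 2" by (rule min_absorb1)
    moreover have "u powr q \<le> u" using False powr_mono'[of 1 q u] assms u by simp
    ultimately show ?thesis using u by (simp add: powr_powr del: powr_numeral)
  qed
  then show ?thesis
    unfolding phi_inv_def phi_u using u assms by (simp add: max_mult_distrib_left)
qed

lemma stability_bound_less_phi_inv:
  assumes "a > 0" "b > 0" "q \<ge> 0" "x > 0" "0 \<le> r" "r < sqrt (x / a)"
  shows "b * (r + r powr q) < phi_inv a b q x"
proof -
  define y where "y = (x / a) powr (1/2)"
  have y: "y = sqrt (x / a)" "y powr q = (x / a) powr (q / 2)"
    using assms unfolding y_def powr_powr by (simp_all add: powr_half_sqrt)
  have "b * (r + r powr q) < b * (y + y powr q)"
    using assms powr_mono2[of q r y] unfolding y by simp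
  also have "\<dots> \<le> 2 * b * max y (y powr q)" using assms by simp
  also have "\<dots> = phi_inv a b q x"
    using assms unfolding phi_inv_def y(2)[symmetric] y_def[symmetric]
    by (simp add: max_mult_distrib_left)
  finally show ?thesis .
qed

definition pull_threshold :: "real \<Rightarrow> real \<Rightarrow> real \<Rightarrow> real \<Rightarrow> nat \<Rightarrow> real \<Rightarrow> nat" where
  "pull_threshold a b q \<alpha> T g = nat \<lfloor>\<alpha> * ln (real T) / phi a b q (g / 2)\<rfloor> + 1"

lemma pull_threshold_ge: "\<alpha> * ln (real T) / phi a b q (g / 2) \<le> real (pull_threshold a b q \<alpha> T g)"
  unfolding pull_threshold_def by linarith

lemma pull_threshold_le:
  "0 \<le> \<alpha> * ln (real T) / phi a b q (g / 2) \<Longrightarrow>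
     real (pull_threshold a b q \<alpha> T g) \<le> \<alpha> * ln (real T) / phi a b q (g / 2) + 1"
  unfolding pull_threshold_def by linarith

lemma phi_inv_le_of_pull_threshold_le:
  assumes "a > 0" "b > 0" "q \<ge> 1" "\<alpha> > 0" "g > 0" "2 \<le> t" "t \<le> T"
    and "pull_threshold a b q \<alpha> T g \<le> s"
  shows "phi_inv a b q (\<alpha> * ln (real t) / real s) \<le> g / 2"
proof -
  define m where "m = pull_threshold a b q \<alpha> T g"
  have m: "1 \<le> m" "m \<le> s" using assms(8) unfolding m_def pull_threshold_def by auto
  have phi: "phi a b q (g / 2) > 0" using assms phi_pos by simp
  have "\<alpha> * ln (real t) / real s \<le> \<alpha> * ln (real T) / real m"
    using assms m by (intro frac_le mult_left_mono) auto
  also have "\<dots> \<le> phi a b q (g / 2)"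
    using pull_threshold_ge[of \<alpha> T a b q g] phi m by (simp add: m_def field_simps)
  finally have "phi_inv a b q (\<alpha> * ln (real t) / real s) \<le> phi_inv a b q (phi a b q (g / 2))"
    using assms m by (intro phi_inv_mono) auto
  also have "\<dots> \<le> g / 2" using assms by (intro phi_inv_phi_le) auto
  finally show ?thesis .
qed

lemma powr_le_diff_powr:
  fixes \<beta> t :: real
  assumes "\<beta> > 0" "t \<ge> 2"
  shows "\<beta> * t powr (- \<beta> - 1) \<le> (t - 1) powr (- \<beta>) - t powr (- \<beta>)"
proof -
  have deriv: "((\<lambda>x. - (x powr (- \<beta>))) has_real_derivative \<beta> * x powr (- \<beta> - 1)) (at x)"
    if "t - 1 \<le> x" "x \<le> t" for x
    using DERIV_minus[OF has_real_derivative_powr[of x "- \<beta>"]] that assms by simp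
  have "\<exists>z. t - 1 < z \<and> z < t \<and>
      - (t powr (- \<beta>)) - - ((t - 1) powr (- \<beta>)) = (t - (t - 1)) * (\<beta> * z powr (- \<beta> - 1))"
    using assms by (intro MVT2 deriv) auto
  then obtain z where z: "t - 1 < z" "z < t"
    "(t - 1) powr (- \<beta>) - t powr (- \<beta>) = \<beta> * z powr (- \<beta> - 1)"
    by auto
  have "t powr (- \<beta> - 1) \<le> z powr (- \<beta> - 1)" using z assms by (intro powr_mono2') auto
  then show ?thesis unfolding z(3) using assms by simp
qed

lemma sum_powr_le:
  assumes "\<alpha> > 2"
  shows "(\<Sum>t=2..T. real t powr (1 - \<alpha>)) \<le> 1 / (\<alpha> - 2)"
proof (cases T)
  case (Suc n)
  define \<beta> where "\<beta> = \<alpha> - 2"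
  have \<beta>: "\<beta> > 0" "1 - \<alpha> = - \<beta> - 1" using assms unfolding \<beta>_def by auto
  \<comment> \<open>Compare each term with an increment of an antiderivative and telescope.\<close>
  have "\<beta> * (\<Sum>t=2..T. real t powr (1 - \<alpha>)) = (\<Sum>i=1..n. \<beta> * real (Suc i) powr (- \<beta> - 1))"
    unfolding Suc numeral_2_eq_2 sum.shift_bounds_cl_Suc_ivl \<beta>(2) by (simp add: sum_distrib_left)
  also have "\<dots> \<le> (\<Sum>i=1..n. real i powr (- \<beta>) - real (Suc i) powr (- \<beta>))"
  proof (rule sum_mono)
    fix i assume "i \<in> {1..n}"
    then show "\<beta> * real (Suc i) powr (- \<beta> - 1) \<le> real i powr (- \<beta>) - real (Suc i) powr (- \<beta>)"
      using powr_le_diff_powr[OF \<beta>(1), of "real (Suc i)"] by simp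
  qed
  also have "\<dots> = 1 - real T powr (- \<beta>)"
    using sum_Suc_diff[of 1 n "\<lambda>i. - (real i powr (- \<beta>))"] Suc by simp
  also have "\<dots> \<le> 1" by simp
  finally have "\<beta> * (\<Sum>t=2..T. real t powr (1 - \<alpha>)) \<le> 1" .
  then show ?thesis using \<beta>(1) by (simp add: \<beta>_def pos_le_divide_eq mult.commute)
qed (use assms in simp)

lemma sum_sum_powr_le:
  assumes "\<alpha> > 2" "1 \<le> K"
  shows "(\<Sum>t=K+1..T. \<Sum>s=1..t-1. real t powr (- \<alpha>)) \<le> 1 / (\<alpha> - 2)"
proof -
  have "(\<Sum>t=K+1..T. \<Sum>s=1..t-1. real t powr (- \<alpha>)) \<le> (\<Sum>t=K+1..T. real t powr (1 - \<alpha>))"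
  proof (rule sum_mono)
    fix t assume "t \<in> {K+1..T}"
    then have "real t powr (1 - \<alpha>) = real t * real t powr (- \<alpha>)"
      using powr_add[of "real t" 1 "- \<alpha>"] by simp
    then show "(\<Sum>s=1..t-1. real t powr (- \<alpha>)) \<le> real t powr (1 - \<alpha>)"
      by (simp add: mult_right_mono)
  qed
  also have "\<dots> \<le> (\<Sum>t=2..T. real t powr (1 - \<alpha>))" using assms(2) by (intro sum_mono2) auto
  also have "\<dots> \<le> 1 / (\<alpha> - 2)" by (rule sum_powr_le[OF assms(1)])
  finally show ?thesis .
qed

section \<open>Counting pulls\<close>

lemma pulls_mono: "t \<le> t' \<Longrightarrow> pulls pol i t \<omega> \<le> pulls pol i t' \<omega>"
  unfolding pulls_def by (intro card_mono) auto

lemma pulls_le: "pulls pol i t \<omega> \<le> t"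
proof -
  have "pulls pol i t \<omega> \<le> card {1..t}" unfolding pulls_def by (intro card_mono) auto
  then show ?thesis by simp
qed

lemma pulls_when_pulled:
  assumes "1 \<le> t" "pol t \<omega> = i"
  shows "pulls pol i t \<omega> = pulls pol i (t - 1) \<omega> + 1"
proof -
  have "{s\<in>{1..t}. pol s \<omega> = i} = insert t {s\<in>{1..t - 1}. pol s \<omega> = i}" using assms by auto
  then show ?thesis unfolding pulls_def using assms by simp
qed

lemma sum_pulls:
  assumes "\<forall>t\<in>{1..T}. pol t \<omega> \<in> {1..K}"
  shows "(\<Sum>i=1..K. pulls pol i T \<omega>) = T"
proof -
  have "(\<Sum>i=1..K. pulls pol i T \<omega>) = (\<Sum>i=1..K. \<Sum>s | s \<in> {1..T} \<and> pol s \<omega> = i. 1)"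
    unfolding pulls_def by simp
  also have "\<dots> = (\<Sum>s\<in>{1..T}. 1)" using assms by (intro sum.group) auto
  finally show ?thesis by simp
qed

lemma pulls_before_pulled_less:
  assumes "1 \<le> x" "pol x \<omega> = i" "x < y"
  shows "pulls pol i (x - 1) \<omega> < pulls pol i (y - 1) \<omega>"
proof -
  have "pulls pol i (x - 1) \<omega> < pulls pol i x \<omega>" using pulls_when_pulled[of x pol \<omega> i] assms by simp
  also have "\<dots> \<le> pulls pol i (y - 1) \<omega>" using assms(3) by (intro pulls_mono) linarith
  finally show ?thesis .
qed

text \<open>Pulls made while the arm has fewer than m earlier pulls have pairwise distinct pull counts
  below m, so there are at most m of them.\<close>
lemma pulls_le_card_late_pulls:
  "pulls pol i T \<omega> \<le> m + card {t\<in>{1..T}. pol t \<omega> = i \<and> m \<le> pulls pol i (t - 1) \<omega>}"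
proof -
  define early where "early = {t\<in>{1..T}. pol t \<omega> = i \<and> pulls pol i (t - 1) \<omega> < m}"
  define late where "late = {t\<in>{1..T}. pol t \<omega> = i \<and> m \<le> pulls pol i (t - 1) \<omega>}"
  have "inj_on (\<lambda>t. pulls pol i (t - 1) \<omega>) early"
  proof (rule linorder_inj_onI')
    fix x y assume "x \<in> early" "y \<in> early" "x < y"
    then show "pulls pol i (x - 1) \<omega> \<noteq> pulls pol i (y - 1) \<omega>"
      using pulls_before_pulled_less[of x pol \<omega> i y] unfolding early_def by auto
  qed
  moreover have "(\<lambda>t. pulls pol i (t - 1) \<omega>) ` early \<subseteq> {..<m}" unfolding early_def by auto
  ultimately have "card early \<le> m" using card_inj_on_le[of _ early "{..<m}"] by fastforce
  moreover have "{s\<in>{1..T}. pol s \<omega> = i} = early \<union> late" unfolding early_def late_def by auto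
  then have "pulls pol i T \<omega> \<le> card early + card late" unfolding pulls_def by (simp add: card_Un_le)
  ultimately show ?thesis unfolding late_def by linarith
qed

lemma unit_vector_in_prob_simplex: "i \<in> {1..K} \<Longrightarrow> (\<lambda>j. if j = i then 1 else 0) \<in> prob_simplex K"
  unfolding prob_simplex_def by auto

lemma arm_in_mixtures:
  assumes "i \<in> {1..K}"
  shows "F i \<in> mixtures K F"
proof -
  have "(\<Sum>j=1..K. (if j = i then 1 else 0) * F j y) = (\<Sum>j=1..K. if j = i then F j y else 0)" for y
    by (rule sum.cong) auto
  then have "mix K F (\<lambda>j. if j = i then 1 else 0) = F i"
    using assms unfolding mix_def by simp
  then show ?thesis
    unfolding mixtures_def using unit_vector_in_prob_simplex[OF assms] by (metis image_eqI)
qed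

lemma emp_arm_in_emp_cdfs: "1 \<le> s \<Longrightarrow> emp_arm X i s \<omega> \<in> emp_cdfs"
  unfolding emp_arm_def emp_cdfs_def by auto

lemma powr_le_mult_rpow:
  assumes "0 \<le> r" "r \<le> d" "1 \<le> q"
  shows "r powr q \<le> r * rpow d (q - 1)"
proof (cases "r = 0")
  case False
  then have "r powr q = r * r powr (q - 1)" using assms powr_add[of r 1 "q - 1"] by simp
  moreover have "r powr (q - 1) \<le> rpow d (q - 1)"
    unfolding rpow_def using assms False by (auto intro: powr_mono2)
  ultimately show ?thesis using assms by (simp add: mult_left_mono)
qed simp

lemma rpow_norm_diff_le_Max:
  fixes K :: nat
  assumes "i \<in> {1..K}" "j \<in> {1..K}"
  shows "rpow (N (\<lambda>y. F i y - F j y)) (q - 1)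
    \<le> Max {rpow (N (\<lambda>y. F i y - F j y)) (q - 1) | i j. i \<in> {1..K} \<and> j \<in> {1..K}}"
proof -
  have "finite {rpow (N (\<lambda>y. F i y - F j y)) (q - 1) | i j. i \<in> {1..K} \<and> j \<in> {1..K}}"
    by (rule finite_image_set2) simp_all
  then show ?thesis using assms by (intro Max_ge) auto
qed

lemma stability_bound_le_lip_const:
  fixes K :: nat
  assumes "i \<in> {1..K}" "j \<in> {1..K}" "0 \<le> r" "r \<le> N (\<lambda>y. F i y - F j y)" "0 \<le> b" "1 \<le> q"
  shows "b * (r + r powr q) \<le> lip_const K F N b q * r"
proof -
  have "r powr q \<le> r * rpow (N (\<lambda>y. F i y - F j y)) (q - 1)"
    using assms by (intro powr_le_mult_rpow)
  also have "\<dots> \<le> r * Max {rpow (N (\<lambda>y. F i y - F j y)) (q - 1) | i j. i \<in> {1..K} \<and> j \<in> {1..K}}"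
    using assms by (intro mult_left_mono rpow_norm_diff_le_Max)
  finally show ?thesis
    unfolding lip_const_def using assms(5) by (simp add: algebra_simps mult_left_mono)
qed

lemma lip_const_nonneg:
  assumes "1 \<le> K" "0 \<le> b"
  shows "0 \<le> lip_const K F N b q"
proof -
  have "0 \<le> rpow (N (\<lambda>y. F 1 y - F 1 y)) (q - 1)" unfolding rpow_def by simp
  also have "\<dots> \<le> Max {rpow (N (\<lambda>y. F i y - F j y)) (q - 1) | i j. i \<in> {1..K} \<and> j \<in> {1..K}}"
    using assms by (intro rpow_norm_diff_le_Max) auto
  finally show ?thesis unfolding lip_const_def using assms by simp
qed

text \<open>The radius is the one at which the tail bound 2 exp (-a s x^2) of strong stability equals
  2 t^-alpha; it is also the radius behind phi_inv in the index at time t.\<close>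
definition deviation_event :: "'a measure \<Rightarrow> (nat \<Rightarrow> nat \<Rightarrow> 'a \<Rightarrow> real) \<Rightarrow> (nat \<Rightarrow> real \<Rightarrow> real)
    \<Rightarrow> ((real \<Rightarrow> real) \<Rightarrow> real) \<Rightarrow> real \<Rightarrow> real \<Rightarrow> nat \<Rightarrow> nat \<Rightarrow> nat \<Rightarrow> 'a set" where
  "deviation_event M X F N a \<alpha> j t s =
     {\<omega>\<in>space M. sqrt (\<alpha> * ln (real t) / real s / a) \<le> N (\<lambda>y. emp_arm X j s \<omega> y - F j y)}"

definition deviation_count :: "'a measure \<Rightarrow> (nat \<Rightarrow> nat \<Rightarrow> 'a \<Rightarrow> real) \<Rightarrow> (nat \<Rightarrow> real \<Rightarrow> real)
    \<Rightarrow> ((real \<Rightarrow> real) \<Rightarrow> real) \<Rightarrow> real \<Rightarrow> real \<Rightarrow> nat \<Rightarrow> nat \<Rightarrow> nat \<Rightarrow> 'a \<Rightarrow> real" where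
  "deviation_count M X F N a \<alpha> K j T \<omega> =
     (\<Sum>t=K+1..T. \<Sum>s=1..t-1. indicator (deviation_event M X F N a \<alpha> j t s) \<omega>)"

lemma deviation_count_nonneg: "0 \<le> deviation_count M X F N a \<alpha> K j T \<omega>"
  unfolding deviation_count_def by (intro sum_nonneg) auto

locale uucb_analysis =
  fixes M :: "'a measure" and K :: nat and X :: "nat \<Rightarrow> nat \<Rightarrow> 'a \<Rightarrow> real"
    and Z :: "'a \<Rightarrow> real" and F :: "nat \<Rightarrow> real \<Rightarrow> real"
    and L :: "(real \<Rightarrow> real) set" and N :: "(real \<Rightarrow> real) \<Rightarrow> real"
    and U :: "(real \<Rightarrow> real) \<Rightarrow> real" and a b q \<alpha> :: real
    and pstar :: "nat \<Rightarrow> real" and istar :: nat and pol :: "nat \<Rightarrow> 'a \<Rightarrow> nat"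
  assumes model: "bandit_model M K X Z F"
    and banach: "banach_bounded_fns L N"
    and L_contains: "mixtures K F \<union> emp_cdfs \<subseteq> L"
    and qconv: "quasiconvex_on L U"
    and stable: "strongly_stable M K X F N U a b q"
    and pstar: "pstar \<in> prob_simplex K"
    and istar: "istar \<in> {1..K}" "\<forall>i\<in>{1..K}. gap U K F pstar istar \<le> gap U K F pstar i"
    and gaps_pos: "\<forall>i\<in>{1..K}. i \<noteq> istar \<longrightarrow> gap U K F pstar i > 0"
    and alpha: "\<alpha> > 2"
    and admissible: "admissible_policy M K X Z pol"
    and ucb: "ucb_policy M K X U a b q \<alpha> pol"
begin

sublocale prob_space M
  using model unfolding bandit_model_def by blast

lemma K_pos: "1 \<le> K"
  using model unfolding bandit_model_def by blast

lemma stable_params: "0 < a" "0 < b" "1 \<le> q"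
  using stable unfolding strongly_stable_def by blast+

lemma utility_diff_le:
  "F' \<in> mixtures K F \<Longrightarrow> G \<in> mixtures K F \<union> emp_cdfs \<Longrightarrow>
     \<bar>U F' - U G\<bar> \<le> b * (N (\<lambda>y. F' y - G y) + N (\<lambda>y. F' y - G y) powr q)"
  using stable unfolding strongly_stable_def by blast

lemma deviation_tail:
  assumes "j \<in> {1..K}" "0 < x" "1 \<le> s"
  shows "{\<omega>\<in>space M. x \<le> N (\<lambda>y. emp_arm X j s \<omega> y - F j y)} \<in> sets M \<and>
     measure M {\<omega>\<in>space M. x \<le> N (\<lambda>y. emp_arm X j s \<omega> y - F j y)} \<le> 2 * exp (- a * real s * x\<^sup>2)"
proof -
  have "\<forall>j\<in>{1..K}. \<forall>x>0. \<forall>s\<ge>1.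
     {\<omega>\<in>space M. x \<le> N (\<lambda>y. emp_arm X j s \<omega> y - F j y)} \<in> sets M \<and>
     measure M {\<omega>\<in>space M. x \<le> N (\<lambda>y. emp_arm X j s \<omega> y - F j y)} \<le> 2 * exp (- a * real s * x\<^sup>2)"
    using stable unfolding strongly_stable_def by blast
  from this[rule_format, OF assms] show ?thesis .
qed

lemma arm_mem: "i \<in> {1..K} \<Longrightarrow> F i \<in> L"
  using arm_in_mixtures[of i K F] L_contains by blast

lemma emp_arm_mem: "1 \<le> s \<Longrightarrow> emp_arm X i s \<omega> \<in> L"
  using emp_arm_in_emp_cdfs[of s X i \<omega>] L_contains by blast

lemma pol_range: "\<omega> \<in> space M \<Longrightarrow> 1 \<le> t \<Longrightarrow> pol t \<omega> \<in> {1..K}"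
  using admissible unfolding admissible_policy_def by blast

lemma pol_round_robin: "\<omega> \<in> space M \<Longrightarrow> \<forall>t\<in>{1..K}. pol t \<omega> = t"
  using ucb unfolding ucb_policy_def by blast

lemma pol_maximizes_index:
  "\<omega> \<in> space M \<Longrightarrow> K + 1 \<le> t \<Longrightarrow> j \<in> {1..K} \<Longrightarrow>
     ucb_index U X a b q \<alpha> pol j t \<omega> \<le> ucb_index U X a b q \<alpha> pol (pol t \<omega>) t \<omega>"
  using ucb unfolding ucb_policy_def by blast

lemma utility_mix_le_best_arm:
  assumes "p \<in> prob_simplex K"
  shows "U (mix K F p) \<le> U (F istar)"
proof -
  have "Max ((\<lambda>i. U (F i)) ` {1..K}) \<in> (\<lambda>i. U (F i)) ` {1..K}"
    using K_pos by (intro Max_in) auto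
  then obtain k where k: "k \<in> {1..K}" "Max ((\<lambda>i. U (F i)) ` {1..K}) = U (F k)" by auto
  have "U (mix K F p) \<le> Max ((\<lambda>i. U (F i)) ` {1..K})"
    unfolding mix_def using assms K_pos arm_mem
    by (intro quasiconvex_on_convex_comb_le_Max[OF banach qconv]) (auto simp: prob_simplex_def)
  also have "\<dots> = U (F k)" by (rule k(2))
  also have "\<dots> \<le> U (F istar)" using istar(2) k(1) unfolding gap_def by auto
  finally show ?thesis .
qed

lemma utility_arm_minus_mix_le:
  assumes k: "k \<in> {1..K}" and p: "p \<in> prob_simplex K"
  shows "U (F k) - U (mix K F p) \<le> lip_const K F N b q * (\<Sum>i=1..K. p i * N (\<lambda>y. F k y - F i y))"
proof -
  define D where "D i = N (\<lambda>y. F k y - F i y)" for i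
  define r where "r = N (\<lambda>y. F k y - mix K F p y)"
  have p_nonneg: "\<And>i. i \<in> {1..K} \<Longrightarrow> 0 \<le> p i" and p_sum: "(\<Sum>i=1..K. p i) = 1"
    using p unfolding prob_simplex_def by auto
  have mix: "mix K F p \<in> mixtures K F" using p unfolding mixtures_def by blast
  have r_nonneg: "0 \<le> r"
    unfolding r_def using L_contains mix
    by (intro fns_norm_nonneg[OF banach] fns_diff_mem[OF banach] arm_mem[OF k]) blast
  have r_le: "r \<le> (\<Sum>i=1..K. p i * D i)"
    unfolding r_def D_def mix_def using arm_mem p_nonneg p_sum
    by (intro fns_norm_diff_convex_comb_le[OF banach] arm_mem[OF k]) auto
  have "Max (D ` {1..K}) \<in> D ` {1..K}" using K_pos by (intro Max_in) auto
  then obtain j where j: "j \<in> {1..K}" "Max (D ` {1..K}) = D j" by blast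
  have "(\<Sum>i=1..K. p i * D i) \<le> (\<Sum>i=1..K. p i * D j)"
    unfolding j(2)[symmetric] using p_nonneg by (intro sum_mono mult_left_mono Max_ge) auto
  with r_le p_sum have "r \<le> D j" by (simp flip: sum_distrib_right)
  have "U (F k) - U (mix K F p) \<le> b * (r + r powr q)"
    using utility_diff_le[OF arm_in_mixtures[OF k], of "mix K F p"] mix unfolding r_def
    by (simp add: abs_le_iff)
  also have "\<dots> \<le> lip_const K F N b q * r"
    using k j(1) r_nonneg \<open>r \<le> D j\<close> stable_params
    unfolding D_def by (intro stability_bound_le_lip_const) auto
  also have "\<dots> \<le> lip_const K F N b q * (\<Sum>i=1..K. p i * D i)"
    using r_le lip_const_nonneg[OF K_pos, of b F N q] stable_params(2)
    by (intro mult_left_mono) auto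
  finally show ?thesis unfolding D_def .
qed

lemma pulls_pos_after_init:
  assumes "\<omega> \<in> space M" "j \<in> {1..K}" "K \<le> t"
  shows "1 \<le> pulls pol j t \<omega>"
proof -
  have "1 \<le> pulls pol j j \<omega>" using assms pulls_when_pulled[of j pol \<omega> j] pol_round_robin by simp
  also have "\<dots> \<le> pulls pol j t \<omega>" using assms by (intro pulls_mono) auto
  finally show ?thesis .
qed

lemma repeated_pull_after_init:
  assumes \<omega>: "\<omega> \<in> space M" and t: "1 \<le> t" "pol t \<omega> = i" and "1 \<le> pulls pol i (t - 1) \<omega>"
  shows "K + 1 \<le> t"
proof (rule ccontr)
  assume "\<not> K + 1 \<le> t"
  then have round_robin: "pol s \<omega> = s" if "s \<in> {1..t}" for s
    using pol_round_robin[OF \<omega>] that by auto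
  have "pol s \<omega> \<noteq> i" if "s \<in> {1..t - 1}" for s
  proof -
    have "s \<in> {1..t}" "s < t" using that by auto
    moreover have "pol t \<omega> = t" using t(1) by (intro round_robin) auto
    ultimately show ?thesis using round_robin t(2) by simp
  qed
  then have "{s\<in>{1..t - 1}. pol s \<omega> = i} = {}" by blast
  then have "pulls pol i (t - 1) \<omega> = 0" unfolding pulls_def by (metis card.empty)
  with assms(4) show False by simp
qed

lemma regret_le_weighted_pulls:
  assumes \<omega>: "\<omega> \<in> space M" and T: "1 \<le> T"
  shows "U (mix K F pstar) - U (proxy_dist K F pol T \<omega>) \<le> lip_const K F N b q / real T *
    (\<Sum>i\<in>{1..K}-{istar}. real (pulls pol i T \<omega>) * N (\<lambda>y. F istar y - F i y))"
proof -
  define c where "c i = real (pulls pol i T \<omega>) / real T" for i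
  define D where "D i = N (\<lambda>y. F istar y - F i y)" for i
  have "(\<Sum>i=1..K. pulls pol i T \<omega>) = T" using \<omega> pol_range by (intro sum_pulls) auto
  then have "(\<Sum>i=1..K. c i) = 1"
    using T unfolding c_def by (simp flip: sum_divide_distrib of_nat_sum)
  then have c: "c \<in> prob_simplex K" unfolding prob_simplex_def c_def by auto
  have proxy: "proxy_dist K F pol T \<omega> = mix K F c"
    unfolding proxy_dist_def mix_def c_def by (simp add: sum_divide_distrib)
  have "U (mix K F pstar) - U (proxy_dist K F pol T \<omega>) \<le> U (F istar) - U (mix K F c)"
    using utility_mix_le_best_arm[OF pstar] proxy by simp
  also have "\<dots> \<le> lip_const K F N b q * (\<Sum>i=1..K. c i * D i)"
    unfolding D_def by (rule utility_arm_minus_mix_le[OF istar(1) c])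
  also have "(\<Sum>i=1..K. c i * D i) = (\<Sum>i\<in>{1..K}-{istar}. c i * D i)"
    using sum.remove[of "{1..K}" istar "\<lambda>i. c i * D i"] istar(1) fns_norm_zero[OF banach]
    unfolding D_def by simp
  also have "\<dots> = (\<Sum>i\<in>{1..K}-{istar}. real (pulls pol i T \<omega>) * D i) / real T"
    unfolding c_def by (simp add: sum_divide_distrib)
  finally show ?thesis unfolding D_def by simp
qed

lemma utility_estimate_close:
  assumes j: "j \<in> {1..K}" and s: "1 \<le> s" and t: "2 \<le> t"
    and \<omega>: "\<omega> \<in> space M" "\<omega> \<notin> deviation_event M X F N a \<alpha> j t s"
  shows "\<bar>U (F j) - U (emp_arm X j s \<omega>)\<bar> < phi_inv a b q (\<alpha> * ln (real t) / real s)"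
proof -
  define r where "r = N (\<lambda>y. emp_arm X j s \<omega> y - F j y)"
  have "N (\<lambda>y. F j y - emp_arm X j s \<omega> y) = r"
    unfolding r_def by (rule fns_norm_diff_commute[OF banach emp_arm_mem[OF s] arm_mem[OF j]])
  then have "\<bar>U (F j) - U (emp_arm X j s \<omega>)\<bar> \<le> b * (r + r powr q)"
    using utility_diff_le[OF arm_in_mixtures[OF j], of "emp_arm X j s \<omega>"]
      emp_arm_in_emp_cdfs[OF s, of X j \<omega>]
    by simp
  also have "\<dots> < phi_inv a b q (\<alpha> * ln (real t) / real s)"
  proof (rule stability_bound_less_phi_inv)
    show "0 < \<alpha> * ln (real t) / real s" using alpha s t by simp
    show "0 \<le> r" unfolding r_def
      by (intro fns_norm_nonneg[OF banach] fns_diff_mem[OF banach] emp_arm_mem[OF s] arm_mem[OF j])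
    show "r < sqrt (\<alpha> * ln (real t) / real s / a)"
      using \<omega> unfolding deviation_event_def r_def by auto
  qed (use stable_params in auto)
  finally show ?thesis .
qed

lemma deviation_event_measure:
  assumes j: "j \<in> {1..K}" and t: "2 \<le> t" and s: "1 \<le> s"
  shows "deviation_event M X F N a \<alpha> j t s \<in> sets M"
    and "measure M (deviation_event M X F N a \<alpha> j t s) \<le> 2 * real t powr (- \<alpha>)"
proof -
  define x where "x = sqrt (\<alpha> * ln (real t) / real s / a)"
  have "0 < \<alpha> * ln (real t) / real s / a" using alpha stable_params s t by simp
  then have x: "0 < x" "x\<^sup>2 = \<alpha> * ln (real t) / real s / a" unfolding x_def by simp_all
  note tail = deviation_tail[OF j x(1) s]
  then show "deviation_event M X F N a \<alpha> j t s \<in> sets M" unfolding deviation_event_def x_def by simp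
  have "exp (- a * real s * x\<^sup>2) = real t powr (- \<alpha>)"
    using x(2) stable_params s t by (simp add: powr_def)
  then show "measure M (deviation_event M X F N a \<alpha> j t s) \<le> 2 * real t powr (- \<alpha>)"
    using tail unfolding deviation_event_def x_def by simp
qed

lemma deviation_at_late_suboptimal_pull:
  assumes \<omega>: "\<omega> \<in> space M" and i: "i \<in> {1..K}" "i \<noteq> istar"
    and t: "K + 1 \<le> t" "t \<le> T" and pulled: "pol t \<omega> = i"
    and enough: "pull_threshold a b q \<alpha> T (gap U K F pstar i) \<le> pulls pol i (t - 1) \<omega>"
  shows "\<exists>s\<in>{1..t - 1}. \<omega> \<in> deviation_event M X F N a \<alpha> istar t s \<or>
    \<omega> \<in> deviation_event M X F N a \<alpha> i t s"
proof (rule ccontr)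
  assume no_deviation: "\<not> ?thesis"
  define s where "s = pulls pol i (t - 1) \<omega>"
  define s' where "s' = pulls pol istar (t - 1) \<omega>"
  define x where "x = \<alpha> * ln (real t) / real s"
  define x' where "x' = \<alpha> * ln (real t) / real s'"
  have "s \<in> {1..t - 1}" "s' \<in> {1..t - 1}"
    unfolding s_def s'_def using i(1) istar(1) t(1) pulls_le pulls_pos_after_init[OF \<omega>] by auto
  moreover have t2: "2 \<le> t" using t K_pos by simp
  ultimately have "\<bar>U (F i) - U (emp_arm X i s \<omega>)\<bar> < phi_inv a b q x"
    and "\<bar>U (F istar) - U (emp_arm X istar s' \<omega>)\<bar> < phi_inv a b q x'"
    unfolding x_def x'_def using no_deviation \<omega> i(1) istar(1)
    by (auto intro!: utility_estimate_close)
  moreover have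
    "U (emp_arm X istar s' \<omega>) + phi_inv a b q x' \<le> U (emp_arm X i s \<omega>) + phi_inv a b q x"
    using pol_maximizes_index[OF \<omega> t(1) istar(1)]
    unfolding ucb_index_def pulled s_def s'_def x_def x'_def by simp
  moreover have "U (mix K F pstar) \<le> U (F istar)" by (rule utility_mix_le_best_arm[OF pstar])
  ultimately have "gap U K F pstar i < 2 * phi_inv a b q x" unfolding gap_def by linarith
  moreover have "phi_inv a b q x \<le> gap U K F pstar i / 2"
    unfolding x_def s_def using stable_params alpha gaps_pos i t t2 enough
    by (intro phi_inv_le_of_pull_threshold_le) auto
  ultimately show False by linarith
qed


definition pull_bound :: "nat \<Rightarrow> nat \<Rightarrow> 'a \<Rightarrow> real" where
  "pull_bound T i = (\<lambda>\<omega>. real (pull_threshold a b q \<alpha> T (gap U K F pstar i))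
     + deviation_count M X F N a \<alpha> K istar T \<omega> + deviation_count M X F N a \<alpha> K i T \<omega>)"

lemma pull_bound_nonneg: "0 \<le> pull_bound T i \<omega>"
  unfolding pull_bound_def using deviation_count_nonneg by (intro add_nonneg_nonneg) auto

lemma pulls_le_pull_bound:
  assumes \<omega>: "\<omega> \<in> space M" and i: "i \<in> {1..K}" "i \<noteq> istar"
  shows "real (pulls pol i T \<omega>) \<le> pull_bound T i \<omega>"
proof -
  define m where "m = pull_threshold a b q \<alpha> T (gap U K F pstar i)"
  define late where "late = {t\<in>{1..T}. pol t \<omega> = i \<and> m \<le> pulls pol i (t - 1) \<omega>}"
  define dev where "dev t = (\<Sum>s=1..t-1. indicator (deviation_event M X F N a \<alpha> istar t s) \<omega>
      + (indicator (deviation_event M X F N a \<alpha> i t s) \<omega> :: real))" for t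
  have late: "K + 1 \<le> t" "t \<le> T" "pol t \<omega> = i" "m \<le> pulls pol i (t - 1) \<omega>" if "t \<in> late" for t
    using that repeated_pull_after_init[OF \<omega>, of t i]
    unfolding late_def m_def pull_threshold_def by auto
  have dev_ge_1: "1 \<le> dev t" if t: "t \<in> late" for t
  proof -
    obtain s where s: "s \<in> {1..t - 1}"
      "\<omega> \<in> deviation_event M X F N a \<alpha> istar t s \<or> \<omega> \<in> deviation_event M X F N a \<alpha> i t s"
      using deviation_at_late_suboptimal_pull[OF \<omega> i late[OF t, unfolded m_def]] by blast
    then have "1 \<le> indicator (deviation_event M X F N a \<alpha> istar t s) \<omega>
        + (indicator (deviation_event M X F N a \<alpha> i t s) \<omega> :: real)"
      by (auto simp: indicator_def)
    also have "\<dots> \<le> dev t" unfolding dev_def using s(1) by (intro member_le_sum) auto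
    finally show ?thesis .
  qed
  have "pulls pol i T \<omega> \<le> m + card late" unfolding late_def by (rule pulls_le_card_late_pulls)
  then have "real (pulls pol i T \<omega>) \<le> real m + (\<Sum>t\<in>late. 1)" by simp
  also have "(\<Sum>t\<in>late. 1) \<le> (\<Sum>t\<in>late. dev t)" using dev_ge_1 by (intro sum_mono) auto
  also have "\<dots> \<le> (\<Sum>t=K+1..T. dev t)"
    using late unfolding dev_def by (intro sum_mono2 sum_nonneg) auto
  also have "\<dots> = deviation_count M X F N a \<alpha> K istar T \<omega> + deviation_count M X F N a \<alpha> K i T \<omega>"
    unfolding dev_def deviation_count_def by (simp add: sum.distrib)
  finally show ?thesis unfolding pull_bound_def m_def by simp
qed

lemma expected_deviation_count:
  assumes j: "j \<in> {1..K}"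
  shows "integrable M (deviation_count M X F N a \<alpha> K j T)"
    and "integral\<^sup>L M (deviation_count M X F N a \<alpha> K j T) \<le> 2 / (\<alpha> - 2)"
proof -
  let ?E = "deviation_event M X F N a \<alpha> j"
  have ts: "2 \<le> t" "1 \<le> s" if "t \<in> {K+1..T}" "s \<in> {1..t-1}" for t s using that K_pos by auto
  have integrable_ind: "integrable M (indicator (?E t s) :: 'a \<Rightarrow> real)"
    if "t \<in> {K+1..T}" "s \<in> {1..t-1}" for t s
    using deviation_event_measure(1)[OF j ts[OF that]]
    by (intro integrable_real_indicator) (simp_all add: less_top[symmetric])
  have integral_ind: "integral\<^sup>L M (indicator (?E t s) :: 'a \<Rightarrow> real) \<le> 2 * real t powr (- \<alpha>)"
    if "t \<in> {K+1..T}" "s \<in> {1..t-1}" for t s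
  proof -
    have "?E t s \<inter> space M = ?E t s" unfolding deviation_event_def by auto
    then show ?thesis using deviation_event_measure(2)[OF j ts[OF that]] by simp
  qed
  show integrable: "integrable M (deviation_count M X F N a \<alpha> K j T)"
    unfolding deviation_count_def using integrable_ind
    by (intro Bochner_Integration.integrable_sum) auto
  have "integral\<^sup>L M (deviation_count M X F N a \<alpha> K j T)
      = (\<Sum>t=K+1..T. integral\<^sup>L M (\<lambda>\<omega>. \<Sum>s=1..t-1. indicator (?E t s) \<omega> :: real))"
    unfolding deviation_count_def using integrable_ind
    by (intro Bochner_Integration.integral_sum Bochner_Integration.integrable_sum) auto
  also have "\<dots> = (\<Sum>t=K+1..T. \<Sum>s=1..t-1. integral\<^sup>L M (indicator (?E t s) :: 'a \<Rightarrow> real))"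
    using integrable_ind by (intro sum.cong refl Bochner_Integration.integral_sum) auto
  also have "\<dots> \<le> (\<Sum>t=K+1..T. \<Sum>s=1..t-1. 2 * real t powr (- \<alpha>))"
    using integral_ind by (intro sum_mono) auto
  also have "\<dots> = 2 * (\<Sum>t=K+1..T. \<Sum>s=1..t-1. real t powr (- \<alpha>))"
    by (simp only: sum_distrib_left)
  also have "\<dots> \<le> 2 * (1 / (\<alpha> - 2))"
    using sum_sum_powr_le[OF alpha K_pos, of T] by (intro mult_left_mono) auto
  finally show "integral\<^sup>L M (deviation_count M X F N a \<alpha> K j T) \<le> 2 / (\<alpha> - 2)" by simp
qed

lemma expected_pull_bound:
  assumes i: "i \<in> {1..K}" "i \<noteq> istar" and T: "1 \<le> T"
  shows "integrable M (pull_bound T i)"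
    and "integral\<^sup>L M (pull_bound T i)
      \<le> \<alpha> * ln (real T) / phi a b q (gap U K F pstar i / 2) + (\<alpha> + 6) / (\<alpha> - 2)"
proof -
  note count_star = expected_deviation_count[OF istar(1), of T]
  note count_i = expected_deviation_count[OF i(1), of T]
  show "integrable M (pull_bound T i)"
    unfolding pull_bound_def using count_star(1) count_i(1) by simp
  have "0 \<le> \<alpha> * ln (real T) / phi a b q (gap U K F pstar i / 2)"
    using alpha T phi_pos[of a b "gap U K F pstar i / 2" q] stable_params gaps_pos i by simp
  then have "real (pull_threshold a b q \<alpha> T (gap U K F pstar i))
      \<le> \<alpha> * ln (real T) / phi a b q (gap U K F pstar i / 2) + 1"
    by (rule pull_threshold_le)
  moreover have "1 + 4 / (\<alpha> - 2) \<le> (\<alpha> + 6) / (\<alpha> - 2)" using alpha by (simp add: field_simps)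
  moreover have "integral\<^sup>L M (pull_bound T i) = real (pull_threshold a b q \<alpha> T (gap U K F pstar i))
      + integral\<^sup>L M (deviation_count M X F N a \<alpha> K istar T)
      + integral\<^sup>L M (deviation_count M X F N a \<alpha> K i T)"
    unfolding pull_bound_def using count_star(1) count_i(1) by (simp add: prob_space)
  ultimately show "integral\<^sup>L M (pull_bound T i)
      \<le> \<alpha> * ln (real T) / phi a b q (gap U K F pstar i / 2) + (\<alpha> + 6) / (\<alpha> - 2)"
    using count_star(2) count_i(2) by linarith
qed


lemma proxy_regret_le:
  assumes T: "1 \<le> T"
  shows "proxy_regret M K F U pstar pol T \<le> lip_const K F N b q / real T *
    (\<Sum>i\<in>{1..K} - {istar}.
       (\<alpha> * ln (real T) / phi a b q (gap U K F pstar i / 2) + (\<alpha> + 6) / (\<alpha> - 2))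
       * N (\<lambda>y. F istar y - F i y))"
proof -
  define c where "c = lip_const K F N b q / real T"
  define D where "D i = N (\<lambda>y. F istar y - F i y)" for i
  define H where "H \<omega> = c * (\<Sum>i\<in>{1..K}-{istar}. D i * pull_bound T i \<omega>)" for \<omega>
  have c: "0 \<le> c" unfolding c_def using lip_const_nonneg K_pos stable_params by simp
  have D: "0 \<le> D i" if "i \<in> {1..K}" for i
    unfolding D_def
    by (intro fns_norm_nonneg[OF banach] fns_diff_mem[OF banach] arm_mem istar(1) that)
  have integrable_H: "integrable M H"
    unfolding H_def using expected_pull_bound(1)[OF _ _ T]
    by (intro integrable_mult_right Bochner_Integration.integrable_sum) auto
  \<comment> \<open>The regret itself need not be integrable: integral_mono' only asks this of the
    nonnegative bound H.\<close>
  have "proxy_regret M K F U pstar pol T \<le> integral\<^sup>L M H"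
    unfolding proxy_regret_def
  proof (rule integral_mono'[OF integrable_H])
    fix \<omega> assume \<omega>: "\<omega> \<in> space M"
    show "0 \<le> H \<omega>"
      unfolding H_def using c D pull_bound_nonneg by (intro mult_nonneg_nonneg sum_nonneg) auto
    have "U (mix K F pstar) - U (proxy_dist K F pol T \<omega>)
        \<le> c * (\<Sum>i\<in>{1..K}-{istar}. real (pulls pol i T \<omega>) * D i)"
      unfolding c_def D_def by (rule regret_le_weighted_pulls[OF \<omega> T])
    also have "\<dots> \<le> H \<omega>"
      unfolding H_def using c D pulls_le_pull_bound[OF \<omega>]
      by (intro mult_left_mono sum_mono) (auto simp: mult.commute intro: mult_left_mono)
    finally show "U (mix K F pstar) - U (proxy_dist K F pol T \<omega>) \<le> H \<omega>" .
  qed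
  also have "integral\<^sup>L M H = c * (\<Sum>i\<in>{1..K}-{istar}. D i * integral\<^sup>L M (pull_bound T i))"
    unfolding H_def using expected_pull_bound(1)[OF _ _ T]
    by (simp add: Bochner_Integration.integral_sum)
  also have "\<dots> \<le> c * (\<Sum>i\<in>{1..K}-{istar}.
      (\<alpha> * ln (real T) / phi a b q (gap U K F pstar i / 2) + (\<alpha> + 6) / (\<alpha> - 2)) * D i)"
    using c D expected_pull_bound(2)[OF _ _ T]
    by (intro mult_left_mono sum_mono) (auto simp: mult.commute intro: mult_left_mono)
  finally show ?thesis unfolding c_def D_def .
qed

end

theorem theorem7:
  fixes M :: "'a measure" and K :: nat and X :: "nat \<Rightarrow> nat \<Rightarrow> 'a \<Rightarrow> real"
    and Z :: "'a \<Rightarrow> real" and F :: "nat \<Rightarrow> real \<Rightarrow> real"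
    and L :: "(real \<Rightarrow> real) set" and N :: "(real \<Rightarrow> real) \<Rightarrow> real"
    and U :: "(real \<Rightarrow> real) \<Rightarrow> real" and a b q \<alpha> :: real
    and pstar :: "nat \<Rightarrow> real" and istar :: nat and pol :: "nat \<Rightarrow> 'a \<Rightarrow> nat" and T :: nat
  assumes model: "bandit_model M K X Z F"
    and banach: "banach_bounded_fns L N"
    and L_contains: "mixtures K F \<union> emp_cdfs \<subseteq> L"
    and qconv: "quasiconvex_on L U"
    and stable: "strongly_stable M K X F N U a b q"
    and pstar: "pstar \<in> prob_simplex K" "\<forall>p\<in>prob_simplex K. U (mix K F p) \<le> U (mix K F pstar)"
    and istar: "istar \<in> {1..K}" "\<forall>i\<in>{1..K}. gap U K F pstar istar \<le> gap U K F pstar i"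
    and gaps_pos: "\<forall>i\<in>{1..K}. i \<noteq> istar \<longrightarrow> gap U K F pstar i > 0"
    and alpha: "\<alpha> > 2"
    and admissible: "admissible_policy M K X Z pol"
    and ucb: "ucb_policy M K X U a b q \<alpha> pol"
    and T: "T \<ge> 1"
  shows "proxy_regret M K F U pstar pol T
     \<le> lip_const K F N b q / real T *
        (\<Sum>i\<in>{1..K} - {istar}.
           (\<alpha> * ln (real T) / phi a b q (gap U K F pstar i / 2) + (\<alpha> + 6) / (\<alpha> - 2))
           * N (\<lambda>y. F istar y - F i y))"
proof -
  interpret uucb_analysis M K X Z F L N U a b q \<alpha> pstar istar pol
    using model banach L_contains qconv stable pstar(1) istar gaps_pos alpha admissible ucb
    by unfold_locales
  show ?thesis by (rule proxy_regret_le[OF T])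
qed

end
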